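(* In the line network model (see context), fix $t\ge1$ and view $R_t:=\rho_{\ell+1}(t)$ as a function $g(z_{1,1},\dots,z_{1,\ell},\dots,z_{t,1},\dots,z_{t,\ell})$ of the link states $z_{s,j}\in\{0,1\}$, $1\le s\le t$, $1\le j\le\ell$. Then $g$ is $1$-Lipschitz in each coordinate: changing the value of a single $z_{s,j}$ (all others fixed) changes the value of $g$ by at most $1$.
   Context: Line network model. Fix integers $\ell\ge1$, $n\ge1$. Given link states $z_{t,i}\in\{0,1\}$ ($1$ = link $i$ ON at step $t$), the rank $\rho_i(t)$ of node $N^{(i)}$ after $t$ steps satisfies $\rho_1(t)=n$, $\rho_i(0)=0$ for $2\le i\le\ell+1$, and $\rho_{i+1}(t)=\rho_{i+1}(t-1)+z_{t,i}\mathbf 1\{\rho_i(t-1)>\rho_{i+1}(t-1)\}$ for $t\ge1$, $1\le i\le\ell$. $R_t=\rho_{\ell+1}(t)$ is the number of innovative (linearly independent) packets received at the destination $N^{(\ell+1)}$ after $t$ steps. *)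

theory Defs
  imports Main
begin

text \<open>Line network: nodes 1..l+1, links 1..l. z t i = True iff link i is ON at step t.
  rho l n z t i is the rank of node i after t steps.\<close>
fun rho :: "nat \<Rightarrow> nat \<Rightarrow> (nat \<Rightarrow> nat \<Rightarrow> bool) \<Rightarrow> nat \<Rightarrow> nat \<Rightarrow> nat" where
  "rho l n z 0 i = (if i = 1 then n else 0)"
| "rho l n z (Suc t) i =
     (if i = 1 then n
      else if 2 \<le> i \<and> i \<le> l + 1 then
        rho l n z t i + (if z (Suc t) (i - 1) \<and> rho l n z t (i - 1) > rho l n z t i then 1 else 0)
      else 0)"

definition R :: "nat \<Rightarrow> nat \<Rightarrow> (nat \<Rightarrow> nat \<Rightarrow> bool) \<Rightarrow> nat \<Rightarrow> nat" where
  "R l n z t = rho l n z t (l + 1)"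

end

theory Submission
  imports Defs
begin

(* Let z' agree with z except possibly in the link states of one step s.
   We show the one-sided bound rho z' t i <= rho z t i + [s <= t] for every node i,
   by induction on t; applying it with the roles of z and z' exchanged gives the
   two-sided Lipschitz bound for R = rho (l+1).  In fact the bound holds even if
   z' changes all link states of step s, and only requires z' <= z outside step s.
   The induction step needs two structural facts about the line network:
   ranks never decrease in time, and ranks never increase along the line
   (a node can only know what its predecessor knows).  With these, if node i of z'
   is ahead by one, it cannot gain a packet unless node i of z gains one too:
   its predecessor under z' is strictly ahead of it, so under z the predecessor is
   still strictly ahead of node i, and the link (after step s) is ON in z as well. *)

lemma rho_source: "rho l n z t 1 = n"
  by (cases t) auto

lemma rho_inner_step:
  assumes "2 \<le> i" "i \<le> l + 1"
  shows "rho l n z (Suc t) i = rho l n z t i +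
    (if z (Suc t) (i - 1) \<and> rho l n z t i < rho l n z t (i - 1) then 1 else 0)"
  using assms by simp

lemma rho_mono_time: "rho l n z t i \<le> rho l n z (Suc t) i"
  by (cases t) (auto simp: rho_source)

lemma rho_antimono_node:
  assumes "1 \<le> i"
  shows "rho l n z t (Suc i) \<le> rho l n z t i"
proof (induction t)
  case 0
  show ?case using assms by simp
next
  case (Suc t)
  have "rho l n z (Suc t) (Suc i) \<le> rho l n z t i"
    using Suc.IH assms by (cases "i = 0") auto
  also have "\<dots> \<le> rho l n z (Suc t) i"
    by (rule rho_mono_time)
  finally show ?case .
qed

lemma rho_dominated_off_step:
  assumes fewer_on: "\<And>u k. u \<noteq> s \<Longrightarrow> z' u k \<Longrightarrow> z u k"
  shows "rho l n z' t i \<le> rho l n z t i + (if s \<le> t then 1 else 0)"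
proof (induction t arbitrary: i)
  case 0
  then show ?case by simp
next
  case (Suc t)
  show ?case
  proof (cases "2 \<le> i \<and> i \<le> l + 1")
    case False
    then show ?thesis by auto
  next
    case True
    then have inner: "2 \<le> i" "i \<le> l + 1" by simp_all
    let ?d = "if s \<le> t then 1 else 0 :: nat"
    have ordered': "rho l n z' t i \<le> rho l n z' t (i - 1)"
      and ordered: "rho l n z t i \<le> rho l n z t (i - 1)"
      using rho_antimono_node[of "i - 1" l n z' t] rho_antimono_node[of "i - 1" l n z t] inner
      by auto
    have ih_node: "rho l n z' t i \<le> rho l n z t i + ?d"
      and ih_pred: "rho l n z' t (i - 1) \<le> rho l n z t (i - 1) + ?d"
      by (rule Suc.IH)+
    have link: "Suc t \<noteq> s \<Longrightarrow> z' (Suc t) (i - 1) \<Longrightarrow> z (Suc t) (i - 1)"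
      using fewer_on by blast
    show ?thesis
      unfolding rho_inner_step[OF inner]
      using ordered' ordered ih_node ih_pred link by (auto split: if_splits)
  qed
qed

theorem mainTheorem6:
  fixes l n t s j :: nat and z :: "nat \<Rightarrow> nat \<Rightarrow> bool" and b :: bool
  assumes "l \<ge> 1" "n \<ge> 1" "t \<ge> 1"
    and "1 \<le> s" "s \<le> t" "1 \<le> j" "j \<le> l"
  shows "\<bar>int (R l n z t) - int (R l n (z(s := (z s)(j := b))) t)\<bar> \<le> 1"
proof -
  let ?z' = "z(s := (z s)(j := b))"
  have "R l n ?z' t \<le> R l n z t + 1"
    using rho_dominated_off_step[of s ?z' z l n t "l + 1"] \<open>s \<le> t\<close>
    unfolding R_def by simp
  moreover have "R l n z t \<le> R l n ?z' t + 1"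
    using rho_dominated_off_step[of s z ?z' l n t "l + 1"] \<open>s \<le> t\<close>
    unfolding R_def by simp
  ultimately show ?thesis by linarith
qed

end
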